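(* Let $G=(V,E)$ be a finite, simple, connected graph with $|V|\geq 3$, let $\Gamma_3(G)=\{\mathcal{T}_1,\dots,\mathcal{T}_m\}$, and let $d\in\mathrm{Der}(\mathcal{A}(G))$ with $d(e_i)=\sum_{k\in V}d_{ik}e_k$. Then: (a) $d_{ii}=0$ for every $i\in V$; (b) for $i\neq j$, $d_{ij}=0$ unless $i$ and $j$ belong to the same class $\mathcal{T}_\ell\in\Gamma_3(G)$; (c) for $i\neq j$ in the same $\mathcal{T}_\ell$, $d_{ij}=-d_{ji}$; (d) for each $\ell\in\{1,\dots,m\}$ and each $i\in\mathcal{T}_\ell$, $\sum_{k\in\mathcal{T}_\ell}d_{ki}=0$. Equivalently, after a permutation of the basis listing the vertices of $\mathcal{T}_1$, then $\mathcal{T}_2$, ..., then $\mathcal{T}_m$, then the remaining vertices, the matrix $(d_{ij})$ is block diagonal with diagonal blocks $A_1(d),\dots,A_m(d),\mathbf{0}$, where each $A_\ell(d)$ is a $|\mathcal{T}_\ell|\times|\mathcal{T}_\ell|$ skew-symmetric matrix with zero diagonal (of the form $U-U^T$ with $U$ strictly upper triangular) satisfying the column-sum condition (d), and all other entries are zero. If $\Gamma_3(G)=\emptyset$ this reduces to $d=0$.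
   Context: Throughout, $\mathbb{K}$ is a field of characteristic $0$. A graph $G=(V,E)$ has vertex set $V=\{1,\dots,n\}$ and is assumed finite, simple (no loops, no multiple edges) and connected. $\mathcal{N}(i)$ denotes the set of neighbors of vertex $i$, $\deg(i)=|\mathcal{N}(i)|$, and $(a_{ij})$ is the adjacency matrix ($a_{ij}=1$ if $i,j$ are adjacent, $0$ otherwise). The evolution algebra $\mathcal{A}(G)$ is the $\mathbb{K}$-algebra with basis $\{e_i: i\in V\}$ and product $e_i\cdot e_i=\sum_{k\in V}a_{ik}e_k=\sum_{k\in\mathcal{N}(i)}e_k$ and $e_i\cdot e_j=0$ for $i\neq j$. A derivation of $\mathcal{A}(G)$ is a linear map $d:\mathcal{A}(G)\to\mathcal{A}(G)$ with $d(u\cdot v)=d(u)\cdot v+u\cdot d(v)$ for all $u,v$; $\mathrm{Der}(\mathcal{A}(G))$ is the space of derivations, and for $d$ in it we write $d(e_i)=\sum_{k\in V}d_{ik}e_k$. Two vertices $i,j$ are twins, written $i\sim_t j$, if $\mathcal{N}(i)=\mathcal{N}(j)$; this is an equivalence relation whose classes are called twin classes. $\Gamma_3(G)$ denotes the set of twin classes of $G$ having at least three vertices. *)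

theory Defs
  imports Main
begin

definition simple_graph :: "('v \<Rightarrow> 'v \<Rightarrow> bool) \<Rightarrow> bool" where
  "simple_graph E \<longleftrightarrow> (\<forall>i. \<not> E i i) \<and> (\<forall>i j. E i j \<longrightarrow> E j i)"

definition connected_graph :: "('v \<Rightarrow> 'v \<Rightarrow> bool) \<Rightarrow> bool" where
  "connected_graph E \<longleftrightarrow> (\<forall>i j. E\<^sup>*\<^sup>* i j)"

definition adj :: "('v \<Rightarrow> 'v \<Rightarrow> bool) \<Rightarrow> 'v \<Rightarrow> 'v \<Rightarrow> 'k::field_char_0" where
  "adj E i k = (if E i k then 1 else 0)"

text \<open>Elements of the evolution algebra A(G) are coordinate vectors
 u = sum_i u i e_i, i.e. functions 'v => 'k.  The product is the bilinear
 extension of e_i e_i = sum_k a_ik e_k, e_i e_j = 0 (i \<noteq> j).\<close>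

definition evo_mult :: "('v::finite \<Rightarrow> 'v \<Rightarrow> bool) \<Rightarrow> ('v \<Rightarrow> 'k::field_char_0) \<Rightarrow> ('v \<Rightarrow> 'k) \<Rightarrow> ('v \<Rightarrow> 'k)" where
  "evo_mult E u w = (\<lambda>k. \<Sum>i\<in>UNIV. u i * w i * adj E i k)"

text \<open>The linear map with matrix D, i.e. d(e_i) = sum_k D i k e_k.\<close>

definition lin_of_mat :: "('v::finite \<Rightarrow> 'v \<Rightarrow> 'k::field_char_0) \<Rightarrow> ('v \<Rightarrow> 'k) \<Rightarrow> ('v \<Rightarrow> 'k)" where
  "lin_of_mat D u = (\<lambda>k. \<Sum>i\<in>UNIV. u i * D i k)"

text \<open>D is the matrix of a derivation of A(G).  Every linear map of the
 finite-dimensional space A(G) is lin_of_mat D for a unique D.\<close>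

definition is_derivation :: "('v::finite \<Rightarrow> 'v \<Rightarrow> bool) \<Rightarrow> ('v \<Rightarrow> 'v \<Rightarrow> 'k::field_char_0) \<Rightarrow> bool" where
  "is_derivation E D \<longleftrightarrow>
     (\<forall>u w. lin_of_mat D (evo_mult E u w) =
            (\<lambda>k. evo_mult E (lin_of_mat D u) w k + evo_mult E u (lin_of_mat D w) k))"

definition twins :: "('v \<Rightarrow> 'v \<Rightarrow> bool) \<Rightarrow> 'v \<Rightarrow> 'v \<Rightarrow> bool" where
  "twins E i j \<longleftrightarrow> {k. E i k} = {k. E j k}"

definition twin_class :: "('v \<Rightarrow> 'v \<Rightarrow> bool) \<Rightarrow> 'v \<Rightarrow> 'v set" where
  "twin_class E i = {j. twins E i j}"

definition Gamma3 :: "('v \<Rightarrow> 'v \<Rightarrow> bool) \<Rightarrow> 'v set set" where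
  "Gamma3 E = {T. (\<exists>i. T = twin_class E i) \<and> card T \<ge> 3}"

end

theory Submission
  imports Defs
begin

text \<open>Evaluating the derivation identity on pairs of basis vectors gives
  \<open>d\<^sub>i\<^sub>j a\<^sub>j\<^sub>k + d\<^sub>j\<^sub>i a\<^sub>i\<^sub>k = 0\<close> for \<open>i \<noteq> j\<close> and \<open>\<Sum>\<^sub>x a\<^sub>i\<^sub>x d\<^sub>x\<^sub>l = 2 d\<^sub>i\<^sub>i a\<^sub>i\<^sub>l\<close>.
  Since every vertex has a neighbour, the first identity kills \<open>d\<^sub>i\<^sub>j\<close> unless
  \<open>i, j\<close> are twins, and makes \<open>d\<close> skew on each twin class.  The second then
  says that the column sums of \<open>d\<close> over the twin class of \<open>l\<close> equal
  \<open>2 d\<^sub>v\<^sub>v\<close> for every neighbour \<open>v\<close> of \<open>l\<close>.  Summing these column sums over the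
  twin class of \<open>a\<close>, skewness leaves the trace \<open>|T| d\<^sub>a\<^sub>a\<close>, so
  \<open>d\<^sub>a\<^sub>a = 2 d\<^sub>b\<^sub>b\<close> for adjacent \<open>a, b\<close>; by symmetry \<open>d\<^sub>a\<^sub>a = 4 d\<^sub>a\<^sub>a = 0\<close>.  In a
  twin class \<open>{i, j}\<close> of size two, the vanishing column sum then forces
  \<open>d\<^sub>i\<^sub>j = 0\<close>.\<close>

definition basis_vec :: "'v \<Rightarrow> 'v \<Rightarrow> 'k::field_char_0" where
  "basis_vec i = (\<lambda>x. if x = i then 1 else 0)"

lemma sum_basis_vec_mult:
  "(\<Sum>x\<in>UNIV. basis_vec (i::'v::finite) x * f x) = (f i :: 'k::field_char_0)"
proof -
  have "(\<Sum>x\<in>UNIV. basis_vec i x * f x) = (\<Sum>x\<in>UNIV. if x = i then f x else 0)"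
    by (rule sum.cong) (auto simp: basis_vec_def)
  then show ?thesis by simp
qed

lemma lin_of_mat_basis_vec: "lin_of_mat D (basis_vec i) = D i"
  by (simp add: lin_of_mat_def sum_basis_vec_mult fun_eq_iff)

lemma evo_mult_basis_vec_right: "evo_mult E u (basis_vec j) = (\<lambda>k. u j * adj E j k)"
  unfolding evo_mult_def
  by (simp add: sum_basis_vec_mult[of j "\<lambda>x. u x * adj E x _", symmetric] algebra_simps)

lemma evo_mult_basis_vec_left: "evo_mult E (basis_vec i) w = (\<lambda>k. w i * adj E i k)"
  unfolding evo_mult_def
  by (simp add: sum_basis_vec_mult[of i "\<lambda>x. w x * adj E x _", symmetric] algebra_simps)

lemma derivation_basis_vec:
  assumes "is_derivation E D"
  shows "lin_of_mat D (evo_mult E (basis_vec i) (basis_vec j)) k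
           = D i j * adj E j k + D j i * adj E i k"
proof -
  have "lin_of_mat D (evo_mult E (basis_vec i) (basis_vec j)) k
      = evo_mult E (lin_of_mat D (basis_vec i)) (basis_vec j) k
        + evo_mult E (basis_vec i) (lin_of_mat D (basis_vec j)) k"
    using assms unfolding is_derivation_def by metis
  then show ?thesis
    by (simp add: lin_of_mat_basis_vec evo_mult_basis_vec_right evo_mult_basis_vec_left)
qed

lemma derivation_offdiag_eq:
  fixes D :: "'v::finite \<Rightarrow> 'v \<Rightarrow> 'k::field_char_0"
  assumes "is_derivation E D" "i \<noteq> j"
  shows "D i j * adj E j k + D j i * adj E i k = 0"
proof -
  have "evo_mult E (basis_vec i) (basis_vec j) = (\<lambda>k. 0 :: 'k)"
    using assms(2) unfolding evo_mult_basis_vec_right by (simp add: basis_vec_def)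
  then have "lin_of_mat D (evo_mult E (basis_vec i) (basis_vec j)) k = 0"
    by (simp add: lin_of_mat_def)
  then show ?thesis
    using derivation_basis_vec[OF assms(1), of i j k] by simp
qed

lemma derivation_diag_eq:
  fixes D :: "'v::finite \<Rightarrow> 'v \<Rightarrow> 'k::field_char_0"
  assumes "is_derivation E D"
  shows "(\<Sum>x\<in>UNIV. adj E i x * D x l) = 2 * D i i * adj E i l"
proof -
  have "evo_mult E (basis_vec i) (basis_vec i) = (adj E i :: 'v \<Rightarrow> 'k)"
    unfolding evo_mult_basis_vec_right by (simp add: basis_vec_def)
  then have "lin_of_mat D (evo_mult E (basis_vec i) (basis_vec i)) l
           = (\<Sum>x\<in>UNIV. adj E i x * D x l)"
    by (simp add: lin_of_mat_def)
  then show ?thesis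
    using derivation_basis_vec[OF assms, of i i l] by (simp add: algebra_simps)
qed

lemma sum_square_eq_trace_if_skew:
  fixes M :: "'a \<Rightarrow> 'a \<Rightarrow> 'k::field_char_0"
  assumes "finite C"
    and "\<And>k l. k \<in> C \<Longrightarrow> l \<in> C \<Longrightarrow> k \<noteq> l \<Longrightarrow> M k l + M l k = 0"
  shows "(\<Sum>l\<in>C. \<Sum>k\<in>C. M k l) = (\<Sum>l\<in>C. M l l)"
proof -
  let ?S = "\<Sum>l\<in>C. \<Sum>k\<in>C. M k l"
  have "?S + ?S = (\<Sum>l\<in>C. \<Sum>k\<in>C. M k l + M l k)"
    by (subst (2) sum.swap) (simp add: sum.distrib)
  also have "\<dots> = (\<Sum>l\<in>C. \<Sum>k\<in>C. if k = l then 2 * M l l else 0)"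
    using assms by (intro sum.cong refl) auto
  also have "\<dots> = (\<Sum>l\<in>C. 2 * M l l)"
    using assms(1) by (intro sum.cong refl) (simp add: sum.delta)
  also have "\<dots> = (\<Sum>l\<in>C. M l l) + (\<Sum>l\<in>C. M l l)"
    by (simp add: sum.distrib[symmetric])
  finally show ?thesis by simp
qed

lemma twins_refl: "twins E i i"
  by (simp add: twins_def)

lemma twins_sym: "twins E i j \<Longrightarrow> twins E j i"
  by (simp add: twins_def)

lemma twin_class_eq: "twins E i j \<Longrightarrow> twin_class E i = twin_class E j"
  by (simp add: twin_class_def twins_def)

lemma twins_adj_eq: "twins E i j \<Longrightarrow> E i k \<longleftrightarrow> E j k"
  by (auto simp: twins_def)

lemma twins_in_twin_class: "k \<in> twin_class E a \<Longrightarrow> l \<in> twin_class E a \<Longrightarrow> twins E k l"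
  by (simp add: twin_class_def twins_def)

lemma twin_class_nonempty: "twin_class E i \<noteq> {}"
  using twins_refl[of E i] by (auto simp: twin_class_def)

lemma Gamma3_eq_twin_class: "T \<in> Gamma3 E \<Longrightarrow> i \<in> T \<Longrightarrow> T = twin_class E i"
  by (auto simp: Gamma3_def twin_class_def twins_def)

lemma card_less_3_eq_pair:
  assumes "finite A" "card A < 3" "i \<in> A" "j \<in> A" "i \<noteq> j"
  shows "A = {i, j}"
proof (rule ccontr)
  assume "A \<noteq> {i, j}"
  then obtain x where "x \<in> A" "x \<noteq> i" "x \<noteq> j" using assms(3,4) by blast
  then have "card {i, j, x} \<le> card A" using assms by (intro card_mono) auto
  with \<open>x \<noteq> i\<close> \<open>x \<noteq> j\<close> assms show False by simp
qed

lemma connected_graph_has_neighbour: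
  fixes E :: "'v::finite \<Rightarrow> 'v \<Rightarrow> bool"
  assumes "connected_graph E" "card (UNIV :: 'v set) \<ge> 2"
  shows "\<exists>b. E a b"
proof -
  have "UNIV \<noteq> {a}"
  proof
    assume "UNIV = {a}"
    then have "card (UNIV :: 'v set) = card {a}" by (rule arg_cong)
    with assms(2) show False by simp
  qed
  then obtain b where "b \<noteq> a" by blast
  moreover have "E\<^sup>*\<^sup>* a b" using assms(1) unfolding connected_graph_def by blast
  ultimately show ?thesis by (metis converse_rtranclpE)
qed

locale evolution_derivation =
  fixes E :: "'v::finite \<Rightarrow> 'v \<Rightarrow> bool" and D :: "'v \<Rightarrow> 'v \<Rightarrow> 'k::field_char_0"
  assumes sym: "E a b \<Longrightarrow> E b a"
    and has_neighbour: "\<exists>b. E a b"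
    and derivation: "is_derivation E D"
begin

lemma entry_eq_0_if_not_twins:
  assumes "\<not> twins E i j"
  shows "D i j = 0"
proof -
  have "i \<noteq> j" using assms twins_refl by metis
  then have off: "D i j * adj E j k + D j i * adj E i k = 0" for k
    by (rule derivation_offdiag_eq[OF derivation])
  obtain k where "E i k \<noteq> E j k" using assms unfolding twins_def by blast
  then show ?thesis
  proof (cases "E i k")
    case True
    obtain k' where "E j k'" using has_neighbour by blast
    with True \<open>E i k \<noteq> E j k\<close> show ?thesis
      using off[of k] off[of k'] by (simp add: adj_def)
  next
    case False
    with \<open>E i k \<noteq> E j k\<close> show ?thesis using off[of k] by (simp add: adj_def)
  qed
qed

lemma skew_on_twins:
  assumes "twins E i j" "i \<noteq> j"
  shows "D i j + D j i = 0"
proof -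
  obtain k where "E i k" using has_neighbour by blast
  moreover from this have "E j k" using twins_adj_eq[OF assms(1)] by simp
  ultimately show ?thesis
    using derivation_offdiag_eq[OF derivation assms(2), of k] by (simp add: adj_def)
qed

lemma twin_class_column_sum:
  assumes "E v l"
  shows "(\<Sum>k\<in>twin_class E l. D k l) = 2 * D v v"
proof -
  have "D x l = 0" if "x \<notin> twin_class E l" for x
    using that entry_eq_0_if_not_twins[of x l] twins_sym[of E x l] by (auto simp: twin_class_def)
  then have "(\<Sum>x\<in>UNIV. adj E v x * D x l) = (\<Sum>x\<in>twin_class E l. adj E v x * D x l)"
    by (intro sum.mono_neutral_right) auto
  also have "\<dots> = (\<Sum>x\<in>twin_class E l. D x l)"
  proof (rule sum.cong)
    fix x assume "x \<in> twin_class E l"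
    then have "E x v"
      using twins_adj_eq[of E l x v] sym[OF assms] by (simp add: twin_class_def)
    then have "E v x" by (rule sym)
    then show "adj E v x * D x l = D x l" by (simp add: adj_def)
  qed simp
  finally show ?thesis
    using derivation_diag_eq[OF derivation, of v l] assms by (simp add: adj_def)
qed

lemma diag_eq_if_twins:
  assumes "twins E a b"
  shows "D a a = D b b"
proof -
  obtain v where "E a v" using has_neighbour by blast
  moreover from this have "E b v" using twins_adj_eq[OF assms] by simp
  ultimately have "2 * D a a = 2 * D b b"
    using twin_class_column_sum[of a v] twin_class_column_sum[of b v] by simp
  then show ?thesis by simp
qed

lemma diag_eq_twice_neighbour:
  assumes "E b a"
  shows "D a a = 2 * D b b"
proof -
  let ?T = "twin_class E a"
  have "(\<Sum>l\<in>?T. 2 * D b b) = (\<Sum>l\<in>?T. \<Sum>k\<in>?T. D k l)"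
  proof (rule sum.cong[OF refl])
    fix l assume "l \<in> ?T"
    then have "twins E a l" by (simp add: twin_class_def)
    then have "E l b" using twins_adj_eq[of E a l b] sym[OF assms] by simp
    then have "(\<Sum>k\<in>twin_class E l. D k l) = 2 * D b b"
      by (rule twin_class_column_sum[OF sym])
    then show "2 * D b b = (\<Sum>k\<in>?T. D k l)"
      using twin_class_eq[OF \<open>twins E a l\<close>] by simp
  qed
  also have "\<dots> = (\<Sum>l\<in>?T. D l l)"
  proof (rule sum_square_eq_trace_if_skew)
    fix k l assume "k \<in> ?T" "l \<in> ?T" "k \<noteq> l"
    then show "D k l + D l k = 0" by (intro skew_on_twins twins_in_twin_class)
  qed simp
  also have "\<dots> = (\<Sum>l\<in>?T. D a a)"
  proof (rule sum.cong[OF refl])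
    fix l assume "l \<in> ?T"
    then show "D l l = D a a" by (simp add: twin_class_def diag_eq_if_twins[symmetric])
  qed
  finally have "of_nat (card ?T) * (2 * D b b) = of_nat (card ?T) * D a a"
    by simp
  moreover have "card ?T \<noteq> 0" using twin_class_nonempty by simp
  ultimately show ?thesis by simp
qed

lemma diag_eq_0: "D a a = 0"
proof -
  obtain b where "E a b" using has_neighbour by blast
  then have "D b b = 2 * D a a" by (rule diag_eq_twice_neighbour)
  moreover have "D a a = 2 * D b b" using \<open>E a b\<close> by (rule diag_eq_twice_neighbour[OF sym])
  ultimately show ?thesis by simp
qed

lemma twin_class_column_sum_eq_0: "(\<Sum>k\<in>twin_class E l. D k l) = 0"
proof -
  obtain v where "E l v" using has_neighbour by blast
  then have "(\<Sum>k\<in>twin_class E l. D k l) = 2 * D v v"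
    by (rule twin_class_column_sum[OF sym])
  then show ?thesis by (simp add: diag_eq_0)
qed

lemma entry_eq_0_outside_Gamma3:
  assumes "i \<noteq> j" "\<not> (\<exists>T\<in>Gamma3 E. i \<in> T \<and> j \<in> T)"
  shows "D i j = 0"
proof (cases "twins E i j")
  case True
  have "i \<in> twin_class E j" "j \<in> twin_class E j"
    using twins_sym[OF True] twins_refl[of E j] by (simp_all add: twin_class_def)
  moreover from this have "card (twin_class E j) < 3"
    using assms(2) by (auto simp: Gamma3_def)
  ultimately have "twin_class E j = {i, j}"
    using assms(1) by (intro card_less_3_eq_pair) simp_all
  then show ?thesis
    using twin_class_column_sum_eq_0[of j] diag_eq_0[of j] assms(1) by simp
qed (rule entry_eq_0_if_not_twins)

lemma skew_on_Gamma3: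
  assumes "T \<in> Gamma3 E" "i \<in> T" "j \<in> T" "i \<noteq> j"
  shows "D i j = - D j i"
proof -
  have "i \<in> twin_class E i" "j \<in> twin_class E i"
    using assms(2,3) Gamma3_eq_twin_class[OF assms(1,2)] by simp_all
  then have "twins E i j" by (rule twins_in_twin_class)
  then show ?thesis using skew_on_twins assms(4) by (simp add: eq_neg_iff_add_eq_0)
qed

lemma Gamma3_column_sum_eq_0:
  assumes "T \<in> Gamma3 E" "i \<in> T"
  shows "(\<Sum>k\<in>T. D k i) = 0"
  using Gamma3_eq_twin_class[OF assms] twin_class_column_sum_eq_0 by simp

end

theorem theorem2p2:
  fixes E :: "'v::finite \<Rightarrow> 'v \<Rightarrow> bool"
    and D :: "'v \<Rightarrow> 'v \<Rightarrow> 'k::field_char_0"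
  assumes "simple_graph E"
    and "connected_graph E"
    and "card (UNIV :: 'v set) \<ge> 3"
    and "is_derivation E D"
  shows "(\<forall>i. D i i = 0)
       \<and> (\<forall>i j. i \<noteq> j \<and> \<not> (\<exists>T\<in>Gamma3 E. i \<in> T \<and> j \<in> T) \<longrightarrow> D i j = 0)
       \<and> (\<forall>T\<in>Gamma3 E. \<forall>i\<in>T. \<forall>j\<in>T. i \<noteq> j \<longrightarrow> D i j = - D j i)
       \<and> (\<forall>T\<in>Gamma3 E. \<forall>i\<in>T. (\<Sum>k\<in>T. D k i) = 0)"
proof -
  interpret evolution_derivation E D
  proof
    show "\<exists>b. E a b" for a
      using assms(3) connected_graph_has_neighbour[OF assms(2)] by simp
  qed (use assms(1,4) in \<open>simp_all add: simple_graph_def\<close>)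
  show ?thesis
    by (intro conjI allI ballI impI; (elim conjE)?;
        rule diag_eq_0 entry_eq_0_outside_Gamma3 skew_on_Gamma3 Gamma3_column_sum_eq_0)
qed

end
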